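(* Let $\mathsf{Op}$ be an operational theory and $\widetilde{\mathsf{Op}}$ its associated GPT, with quotient map $\sim:\mathsf{Op}\to\widetilde{\mathsf{Op}}$, $T\mapsto\widetilde T$. Then there is a one-to-one correspondence between noncontextual ontological models $\xi_{\mathrm{nc}}:\mathsf{Op}\to\mathbf{SubStoch}$ of $\mathsf{Op}$ and ontological models $\widetilde\xi:\widetilde{\mathsf{Op}}\to\mathbf{SubStoch}$ of $\widetilde{\mathsf{Op}}$, given by $\widetilde\xi\mapsto\widetilde\xi\circ\sim$ (with inverse $\xi_{\mathrm{nc}}\mapsto$ the map $\widetilde T\mapsto\xi_{\mathrm{nc}}(T)$ for any representative $T$ of $\widetilde T$).
   Context: A process theory consists of systems (closed under a composition $A\otimes B$, with a trivial system $I$) and processes $T:A\to B$, closed under sequential composition $\circ$ and parallel composition $\otimes$ and containing identities; processes $I\to A$ are states (preparations), $A\to I$ effects, $I\to I$ closed diagrams. An operational theory is a process theory $\mathsf{Op}$ (whose processes are laboratory procedures) together with a probability rule $p$ assigning to each closed diagram $D$ a number $p(D)\in[0,1]$, with $p(D_1\otimes D_2)=p(D_1)p(D_2)$. A tester for type $A\to B$ is a triple $\tau=(s,e,W)$ of a system $W$, a process $s:I\to A\otimes W$ and a process $e:B\otimes W\to I$; write $\tau[T]:=e\circ(T\otimes\mathrm{id}_W)\circ s$. Processes $T,T':A\to B$ are operationally equivalent, $T\simeq T'$, iff $p(\tau[T])=p(\tau[T'])$ for all testers $\tau$. Standing assumptions: for any processes $T_2,T_3$ of the same type and $\omega\in[0,1]$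 there is a process $T_1$ (their mixture with weights $\omega,1-\omega$) with $p(\tau[T_1])=\omega p(\tau[T_2])+(1-\omega)p(\tau[T_3])$ for all testers $\tau$; if an effect $E_1$ is the coarse-graining of effects $E_2,E_3$ then $p(E_1\circ P)=p(E_2\circ P)+p(E_3\circ P)$ for all states $P$; all deterministic effects on a system (implement a measurement and ignore its outcome) are operationally equivalent; and (finite tomography) for each type $A\to B$ there are finitely many testers $\tau_1,\dots,\tau_m$ with $T\simeq T'$ iff $p(\tau_\alpha[T])=p(\tau_\alpha[T'])$ for all $\alpha$. The associated GPT $\widetilde{\mathsf{Op}}$ has the same systems, and its processes are the equivalence classes $\widetilde T$ of $\simeq$, composed via representatives ($\widetilde R\circ\widetilde T:=\widetilde{R\circ T}$, $\widetilde R\otimes\widetilde T:=\widetilde{R\otimes T}$); the quotient map $\sim$ is diagram-preserving, and closed diagrams are identified with their probabilities. Each $\widetilde T$ of type $A\to B$ is identified with the vector $(p(\tau_\alpha[T]))_\alpha\in\mathbb{R}^m$, which gives meaning to linear combinations of equivalence classes; if $T_1$ is a mixture of $T_2,T_3$ with weights $\omega,1-\omega$ then $\widetilde T_1=\omega\widetilde T_2+(1-\omega)\widetilde T_3$. The common class of deterministic effects on $A$ is denoted $u_A$. $\mathbf{SubStoch}$ is the process theory whose systems are spaces $\mathbb{R}^\Lambda$ of real functions on finite sets $\Lambda$ (with $\mathbb{R}^{\Lambda}\otimes\mathbb{R}^{\Lambda'}=\mathbb{R}^{\Lambda\times\Lambda'}$, trivial system $\mathbb{R}$), and whose processes are substochastic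 maps (linear maps with matrix $f(\lambda'|\lambda)\in[0,1]$, $\sum_{\lambda'}f(\lambda'|\lambda)\le1$), composed by composition and tensor product of maps; $\mathbf{1}_\Lambda$ denotes the all-ones covector $v\mapsto\sum_\lambda v(\lambda)$. A map $\xi$ from a process theory to $\mathbf{SubStoch}$ is diagram-preserving if it sends each system $A$ to some $\mathbb{R}^{\Lambda_A}$ with $A\otimes B\mapsto\mathbb{R}^{\Lambda_A}\otimes\mathbb{R}^{\Lambda_B}$, $I\mapsto\mathbb{R}$, and each process $A\to B$ to a substochastic map $\mathbb{R}^{\Lambda_A}\to\mathbb{R}^{\Lambda_B}$, preserving $\circ$, $\otimes$ and identities. An ontological model of $\mathsf{Op}$ is a diagram-preserving $\xi:\mathsf{Op}\to\mathbf{SubStoch}$ such that (1) every deterministic effect on $A$ is mapped to $\mathbf{1}_{\Lambda_A}$; (2) $\xi(D)=p(D)$ for every closed diagram $D$; (3) if $T_1$ is a mixture of $T_2,T_3$ with weights $\omega,1-\omega$ then $\xi(T_1)=\omega\xi(T_2)+(1-\omega)\xi(T_3)$, and if an effect is the coarse-graining of effects its image is the sum of their images. It is noncontextual if $T\simeq T'$ implies $\xi(T)=\xi(T')$. An ontological model of $\widetilde{\mathsf{Op}}$ is a diagram-preserving $\widetilde\xi:\widetilde{\mathsf{Op}}\to\mathbf{SubStoch}$ such that (1) $\widetilde\xi(u_A)=\mathbf{1}_{\Lambda_A}$; (2) $\widetilde\xi$ maps every closed diagram to its probability; (3) whenever $\widetilde T_1=\omega\widetilde T_2+(1-\omega)\widetilde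 T_3$ then $\widetilde\xi(\widetilde T_1)=\omega\widetilde\xi(\widetilde T_2)+(1-\omega)\widetilde\xi(\widetilde T_3)$, and likewise coarse-graining relations among effects are preserved. *)

theory Defs
  imports Complex_Main
begin

text \<open>An operational theory: a process theory (systems of type 's, processes of
type 'p, with domain/codomain, sequential composition seqP R T = R o T,
parallel composition, identities, trivial system) together with the
probability rule, the mixture relation (mixture w T1 T2 T3: T1 is the mixture
of T2, T3 with weights w, 1-w), the coarse-graining relation among effects
(coarse E1 E2 E3: E1 is the coarse-graining of E2 and E3), the predicate of
being a deterministic effect, and a choice of finitely many fiducial testers
for each type A to B.\<close>

record ('s, 'p) op_theory =
  unitS  :: 's
  tensS  :: "'s \<Rightarrow> 's \<Rightarrow> 's"
  pdom   :: "'p \<Rightarrow> 's"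
  pcod   :: "'p \<Rightarrow> 's"
  seqP   :: "'p \<Rightarrow> 'p \<Rightarrow> 'p"
  parP   :: "'p \<Rightarrow> 'p \<Rightarrow> 'p"
  idP    :: "'s \<Rightarrow> 'p"
  prob   :: "'p \<Rightarrow> real"
  mixture :: "real \<Rightarrow> 'p \<Rightarrow> 'p \<Rightarrow> 'p \<Rightarrow> bool"
  coarse :: "'p \<Rightarrow> 'p \<Rightarrow> 'p \<Rightarrow> bool"
  determ :: "'p \<Rightarrow> bool"
  fid    :: "'s \<Rightarrow> 's \<Rightarrow> ('p \<times> 'p \<times> 's) list"

definition process_theory :: "('s, 'p) op_theory \<Rightarrow> bool" where
  "process_theory Th \<longleftrightarrow>
     (\<forall>A. tensS Th (unitS Th) A = A \<and> tensS Th A (unitS Th) = A) \<and>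
     (\<forall>R T. pcod Th T = pdom Th R \<longrightarrow>
        pdom Th (seqP Th R T) = pdom Th T \<and> pcod Th (seqP Th R T) = pcod Th R) \<and>
     (\<forall>T S. pdom Th (parP Th T S) = tensS Th (pdom Th T) (pdom Th S) \<and>
            pcod Th (parP Th T S) = tensS Th (pcod Th T) (pcod Th S)) \<and>
     (\<forall>A. pdom Th (idP Th A) = A \<and> pcod Th (idP Th A) = A)"

definition closed_diagram :: "('s, 'p) op_theory \<Rightarrow> 'p \<Rightarrow> bool" where
  "closed_diagram Th D \<longleftrightarrow> pdom Th D = unitS Th \<and> pcod Th D = unitS Th"

definition is_state :: "('s, 'p) op_theory \<Rightarrow> 's \<Rightarrow> 'p \<Rightarrow> bool" where
  "is_state Th A P \<longleftrightarrow> pdom Th P = unitS Th \<and> pcod Th P = A"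

definition is_effect :: "('s, 'p) op_theory \<Rightarrow> 's \<Rightarrow> 'p \<Rightarrow> bool" where
  "is_effect Th A E \<longleftrightarrow> pdom Th E = A \<and> pcod Th E = unitS Th"

definition is_tester :: "('s, 'p) op_theory \<Rightarrow> 's \<Rightarrow> 's \<Rightarrow> 'p \<times> 'p \<times> 's \<Rightarrow> bool" where
  "is_tester Th A B \<tau> = (case \<tau> of (s, e, W) \<Rightarrow>
      pdom Th s = unitS Th \<and> pcod Th s = tensS Th A W \<and>
      pdom Th e = tensS Th B W \<and> pcod Th e = unitS Th)"

definition apply_tester :: "('s, 'p) op_theory \<Rightarrow> 'p \<times> 'p \<times> 's \<Rightarrow> 'p \<Rightarrow> 'p" where
  "apply_tester Th \<tau> T = (case \<tau> of (s, e, W) \<Rightarrow>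
      seqP Th e (seqP Th (parP Th T (idP Th W)) s))"

definition same_type :: "('s, 'p) op_theory \<Rightarrow> 'p \<Rightarrow> 'p \<Rightarrow> bool" where
  "same_type Th T T' \<longleftrightarrow> pdom Th T = pdom Th T' \<and> pcod Th T = pcod Th T'"

definition op_equiv :: "('s, 'p) op_theory \<Rightarrow> 'p \<Rightarrow> 'p \<Rightarrow> bool" where
  "op_equiv Th T T' \<longleftrightarrow> same_type Th T T' \<and>
     (\<forall>\<tau>. is_tester Th (pdom Th T) (pcod Th T) \<tau> \<longrightarrow>
            prob Th (apply_tester Th \<tau> T) = prob Th (apply_tester Th \<tau> T'))"

definition operational_theory :: "('s, 'p) op_theory \<Rightarrow> bool" where
  "operational_theory Th \<longleftrightarrow>
     process_theory Th \<and>
     (\<forall>D. closed_diagram Th D \<longrightarrow> 0 \<le> prob Th D \<and> prob Th D \<le> 1) \<and>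
     (\<forall>D1 D2. closed_diagram Th D1 \<and> closed_diagram Th D2 \<longrightarrow>
        prob Th (parP Th D1 D2) = prob Th D1 * prob Th D2) \<and>
     \<comment> \<open>mixtures: meaning and existence\<close>
     (\<forall>w T1 T2 T3. mixture Th w T1 T2 T3 \<longrightarrow>
        0 \<le> w \<and> w \<le> 1 \<and> same_type Th T1 T2 \<and> same_type Th T1 T3 \<and>
        (\<forall>\<tau>. is_tester Th (pdom Th T1) (pcod Th T1) \<tau> \<longrightarrow>
           prob Th (apply_tester Th \<tau> T1) =
             w * prob Th (apply_tester Th \<tau> T2) + (1 - w) * prob Th (apply_tester Th \<tau> T3))) \<and>
     (\<forall>w T2 T3. 0 \<le> w \<and> w \<le> 1 \<and> same_type Th T2 T3 \<longrightarrow> (\<exists>T1. mixture Th w T1 T2 T3)) \<and>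
     \<comment> \<open>coarse-graining of effects\<close>
     (\<forall>E1 E2 E3. coarse Th E1 E2 E3 \<longrightarrow>
        (\<exists>A. is_effect Th A E1 \<and> is_effect Th A E2 \<and> is_effect Th A E3 \<and>
           (\<forall>P. is_state Th A P \<longrightarrow>
              prob Th (seqP Th E1 P) = prob Th (seqP Th E2 P) + prob Th (seqP Th E3 P)))) \<and>
     \<comment> \<open>deterministic effects are effects and are all operationally equivalent\<close>
     (\<forall>E. determ Th E \<longrightarrow> pcod Th E = unitS Th) \<and>
     (\<forall>E E'. determ Th E \<and> determ Th E' \<and> pdom Th E = pdom Th E' \<longrightarrow> op_equiv Th E E') \<and>
     \<comment> \<open>finite tomography\<close>
     (\<forall>A B. (\<forall>\<tau>\<in>set (fid Th A B). is_tester Th A B \<tau>) \<and>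
        (\<forall>T T'. pdom Th T = A \<and> pcod Th T = B \<and> pdom Th T' = A \<and> pcod Th T' = B \<longrightarrow>
           (op_equiv Th T T' \<longleftrightarrow>
              (\<forall>\<tau>\<in>set (fid Th A B). prob Th (apply_tester Th \<tau> T) = prob Th (apply_tester Th \<tau> T')))))"

definition gpt_class :: "('s, 'p) op_theory \<Rightarrow> 'p \<Rightarrow> 'p set" where
  "gpt_class Th T = {T'. op_equiv Th T T'}"

text \<open>Convex-combination relation among GPT processes, in terms of the vectors
of fiducial-tester probabilities of representatives.\<close>
definition gpt_mix :: "('s, 'p) op_theory \<Rightarrow> real \<Rightarrow> 'p \<Rightarrow> 'p \<Rightarrow> 'p \<Rightarrow> bool" where
  "gpt_mix Th w T1 T2 T3 \<longleftrightarrow> 0 \<le> w \<and> w \<le> 1 \<and> same_type Th T1 T2 \<and> same_type Th T1 T3 \<and>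
     (\<forall>\<tau>\<in>set (fid Th (pdom Th T1) (pcod Th T1)).
        prob Th (apply_tester Th \<tau> T1) =
          w * prob Th (apply_tester Th \<tau> T2) + (1 - w) * prob Th (apply_tester Th \<tau> T3))"

text \<open>Ontic state spaces are finite sets of lists over an alphabet 'o; the
product of ontic spaces is represented by concatenation (required injective),
the trivial system by the singleton of the empty list. A substochastic map
R^L -> R^L' is a matrix f y x (y in L', x in L), extended by zero.\<close>

type_synonym 'o mat = "'o list \<Rightarrow> 'o list \<Rightarrow> real"

definition substoch :: "'o list set \<Rightarrow> 'o list set \<Rightarrow> 'o mat \<Rightarrow> bool" where
  "substoch L L' f \<longleftrightarrow>
     (\<forall>y x. 0 \<le> f y x \<and> f y x \<le> 1) \<and>
     (\<forall>y x. y \<notin> L' \<or> x \<notin> L \<longrightarrow> f y x = 0) \<and>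
     (\<forall>x\<in>L. (\<Sum>y\<in>L'. f y x) \<le> 1)"

definition matcomp :: "'o list set \<Rightarrow> 'o mat \<Rightarrow> 'o mat \<Rightarrow> 'o mat" where
  "matcomp L f g = (\<lambda>y x. \<Sum>z\<in>L. f y z * g z x)"

definition idmat :: "'o list set \<Rightarrow> 'o mat" where
  "idmat L = (\<lambda>y x. if x \<in> L \<and> y = x then 1 else 0)"

definition onesmat :: "'o list set \<Rightarrow> 'o mat" where
  "onesmat L = (\<lambda>y x. if y = [] \<and> x \<in> L then 1 else 0)"

text \<open>Common conditions for a diagram-preserving map into SubStoch that is an
ontological model; f gives the image of (the process represented by) each
process of Op; mixrel is the mixture relation to be respected.\<close>
definition model_conds ::
  "('s, 'p) op_theory \<Rightarrow> (real \<Rightarrow> 'p \<Rightarrow> 'p \<Rightarrow> 'p \<Rightarrow> bool) \<Rightarrow>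
   ('s \<Rightarrow> 'o list set) \<Rightarrow> ('p \<Rightarrow> 'o mat) \<Rightarrow> bool" where
  "model_conds Th mixrel \<Lambda> f \<longleftrightarrow>
     \<comment> \<open>diagram preservation\<close>
     (\<forall>A. finite (\<Lambda> A)) \<and>
     \<Lambda> (unitS Th) = {[]} \<and>
     (\<forall>A B. \<Lambda> (tensS Th A B) = {xs @ ys |xs ys. xs \<in> \<Lambda> A \<and> ys \<in> \<Lambda> B} \<and>
            inj_on (\<lambda>(xs, ys). xs @ ys) (\<Lambda> A \<times> \<Lambda> B)) \<and>
     (\<forall>T. substoch (\<Lambda> (pdom Th T)) (\<Lambda> (pcod Th T)) (f T)) \<and>
     (\<forall>R T. pcod Th T = pdom Th R \<longrightarrow> f (seqP Th R T) = matcomp (\<Lambda> (pcod Th T)) (f R) (f T)) \<and>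
     (\<forall>T S. \<forall>x1\<in>\<Lambda> (pdom Th T). \<forall>x2\<in>\<Lambda> (pdom Th S). \<forall>y1\<in>\<Lambda> (pcod Th T). \<forall>y2\<in>\<Lambda> (pcod Th S).
        f (parP Th T S) (y1 @ y2) (x1 @ x2) = f T y1 x1 * f S y2 x2) \<and>
     (\<forall>A. f (idP Th A) = idmat (\<Lambda> A)) \<and>
     \<comment> \<open>(1) deterministic effects go to the all-ones covector\<close>
     (\<forall>E. determ Th E \<longrightarrow> f E = onesmat (\<Lambda> (pdom Th E))) \<and>
     \<comment> \<open>(2) closed diagrams go to their probabilities\<close>
     (\<forall>D. closed_diagram Th D \<longrightarrow> f D [] [] = prob Th D) \<and>
     \<comment> \<open>(3) convexity and coarse-graining\<close>
     (\<forall>w T1 T2 T3. mixrel w T1 T2 T3 \<longrightarrow>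
        f T1 = (\<lambda>y x. w * f T2 y x + (1 - w) * f T3 y x)) \<and>
     (\<forall>E1 E2 E3. coarse Th E1 E2 E3 \<longrightarrow> f E1 = (\<lambda>y x. f E2 y x + f E3 y x))"

definition ontological_model ::
  "('s, 'p) op_theory \<Rightarrow> ('s \<Rightarrow> 'o list set) \<times> ('p \<Rightarrow> 'o mat) \<Rightarrow> bool" where
  "ontological_model Th m \<longleftrightarrow> model_conds Th (mixture Th) (fst m) (snd m)"

definition noncontextual ::
  "('s, 'p) op_theory \<Rightarrow> ('s \<Rightarrow> 'o list set) \<times> ('p \<Rightarrow> 'o mat) \<Rightarrow> bool" where
  "noncontextual Th m \<longleftrightarrow> (\<forall>T T'. op_equiv Th T T' \<longrightarrow> snd m T = snd m T')"

text \<open>An ontological model of the GPT: a map on equivalence classes (and zero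
off the set of classes), diagram-preserving w.r.t. composition via
representatives.\<close>
definition gpt_ontological_model ::
  "('s, 'p) op_theory \<Rightarrow> ('s \<Rightarrow> 'o list set) \<times> ('p set \<Rightarrow> 'o mat) \<Rightarrow> bool" where
  "gpt_ontological_model Th m \<longleftrightarrow>
     model_conds Th (gpt_mix Th) (fst m) (snd m \<circ> gpt_class Th) \<and>
     (\<forall>X. X \<notin> range (gpt_class Th) \<longrightarrow> snd m X = (\<lambda>_ _. 0))"

definition compose_quotient ::
  "('s, 'p) op_theory \<Rightarrow> ('s \<Rightarrow> 'o list set) \<times> ('p set \<Rightarrow> 'o mat) \<Rightarrow>
   ('s \<Rightarrow> 'o list set) \<times> ('p \<Rightarrow> 'o mat)" where
  "compose_quotient Th m = (fst m, snd m \<circ> gpt_class Th)"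

end

theory Submission
  imports Defs
begin

text \<open>A noncontextual ontological model is, by definition, constant on operational
equivalence classes, so it factors uniquely through the quotient map; precomposing
with the quotient is injective because a GPT model vanishes off the classes. The
only real content is that the convexity conditions match: every mixture in Op
yields a convex relation of fiducial-tester vectors, and conversely, by finite
tomography, such a relation among classes is realised by an actual mixture up to
operational equivalence.\<close>

lemma op_equiv_refl: "op_equiv Th T T"
  by (simp add: op_equiv_def same_type_def)

lemma op_equiv_sym: "op_equiv Th T T' \<Longrightarrow> op_equiv Th T' T"
  by (auto simp: op_equiv_def same_type_def)

lemma op_equiv_trans: "op_equiv Th T T' \<Longrightarrow> op_equiv Th T' T'' \<Longrightarrow> op_equiv Th T T''"
  by (auto simp: op_equiv_def same_type_def)

lemma gpt_class_eq_iff: "gpt_class Th T = gpt_class Th T' \<longleftrightarrow> op_equiv Th T T'"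
proof
  assume "gpt_class Th T = gpt_class Th T'"
  then show "op_equiv Th T T'"
    using op_equiv_refl[of Th T'] by (auto simp: gpt_class_def)
next
  assume "op_equiv Th T T'"
  then show "gpt_class Th T = gpt_class Th T'"
    unfolding gpt_class_def by (blast intro: op_equiv_sym op_equiv_trans)
qed

lemma operational_theory_mixtureD:
  assumes "operational_theory Th" and "mixture Th w T1 T2 T3"
  shows "0 \<le> w" "w \<le> 1" "same_type Th T1 T2" "same_type Th T1 T3"
    and "is_tester Th (pdom Th T1) (pcod Th T1) \<tau> \<Longrightarrow>
      prob Th (apply_tester Th \<tau> T1) =
        w * prob Th (apply_tester Th \<tau> T2) + (1 - w) * prob Th (apply_tester Th \<tau> T3)"
proof -
  have "\<forall>w T1 T2 T3. mixture Th w T1 T2 T3 \<longrightarrow>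
        0 \<le> w \<and> w \<le> 1 \<and> same_type Th T1 T2 \<and> same_type Th T1 T3 \<and>
        (\<forall>\<tau>. is_tester Th (pdom Th T1) (pcod Th T1) \<tau> \<longrightarrow>
           prob Th (apply_tester Th \<tau> T1) =
             w * prob Th (apply_tester Th \<tau> T2) + (1 - w) * prob Th (apply_tester Th \<tau> T3))"
    using assms(1) unfolding operational_theory_def by (elim conjE)
  with assms(2) show "0 \<le> w" "w \<le> 1" "same_type Th T1 T2" "same_type Th T1 T3"
    and "is_tester Th (pdom Th T1) (pcod Th T1) \<tau> \<Longrightarrow>
      prob Th (apply_tester Th \<tau> T1) =
        w * prob Th (apply_tester Th \<tau> T2) + (1 - w) * prob Th (apply_tester Th \<tau> T3)"
    by blast+
qed

lemma operational_theory_mixture_exists: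
  assumes "operational_theory Th" and "0 \<le> w" "w \<le> 1" "same_type Th T2 T3"
  obtains T1 where "mixture Th w T1 T2 T3"
proof -
  have "\<forall>w T2 T3. 0 \<le> w \<and> w \<le> 1 \<and> same_type Th T2 T3 \<longrightarrow> (\<exists>T1. mixture Th w T1 T2 T3)"
    using assms(1) unfolding operational_theory_def by (elim conjE)
  with assms(2-4) that show thesis
    by blast
qed

lemma operational_theory_fid:
  assumes "operational_theory Th"
  shows "\<tau> \<in> set (fid Th A B) \<Longrightarrow> is_tester Th A B \<tau>"
    and "\<lbrakk>pdom Th T = A; pcod Th T = B; pdom Th T' = A; pcod Th T' = B;
          \<And>\<tau>. \<tau> \<in> set (fid Th A B) \<Longrightarrow>
            prob Th (apply_tester Th \<tau> T) = prob Th (apply_tester Th \<tau> T')\<rbrakk>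
         \<Longrightarrow> op_equiv Th T T'"
proof -
  have "\<forall>A B. (\<forall>\<tau>\<in>set (fid Th A B). is_tester Th A B \<tau>) \<and>
        (\<forall>T T'. pdom Th T = A \<and> pcod Th T = B \<and> pdom Th T' = A \<and> pcod Th T' = B \<longrightarrow>
           (op_equiv Th T T' \<longleftrightarrow>
              (\<forall>\<tau>\<in>set (fid Th A B). prob Th (apply_tester Th \<tau> T) = prob Th (apply_tester Th \<tau> T'))))"
    using assms unfolding operational_theory_def by (elim conjE)
  then show "\<tau> \<in> set (fid Th A B) \<Longrightarrow> is_tester Th A B \<tau>"
    and "\<lbrakk>pdom Th T = A; pcod Th T = B; pdom Th T' = A; pcod Th T' = B;
          \<And>\<tau>. \<tau> \<in> set (fid Th A B) \<Longrightarrow>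
            prob Th (apply_tester Th \<tau> T) = prob Th (apply_tester Th \<tau> T')\<rbrakk>
         \<Longrightarrow> op_equiv Th T T'"
    by blast+
qed

lemma mixture_imp_gpt_mix:
  assumes "operational_theory Th" and "mixture Th w T1 T2 T3"
  shows "gpt_mix Th w T1 T2 T3"
  using operational_theory_mixtureD[OF assms] operational_theory_fid(1)[OF assms(1)]
  unfolding gpt_mix_def by blast

lemma gpt_mix_imp_equiv_mixture:
  assumes ot: "operational_theory Th" and gm: "gpt_mix Th w T1 T2 T3"
  obtains T1' where "mixture Th w T1' T2 T3" and "op_equiv Th T1 T1'"
proof -
  have types: "same_type Th T1 T2" "same_type Th T1 T3" and w: "0 \<le> w" "w \<le> 1"
    using gm by (simp_all add: gpt_mix_def)
  then have "same_type Th T2 T3"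
    by (simp add: same_type_def)
  then obtain T1' where mix: "mixture Th w T1' T2 T3"
    using operational_theory_mixture_exists[OF ot w] by blast
  have same: "same_type Th T1 T1'"
    using types operational_theory_mixtureD(3)[OF ot mix] by (simp add: same_type_def)
  have "op_equiv Th T1 T1'"
  proof (rule operational_theory_fid(2)[OF ot refl refl])
    show "pdom Th T1' = pdom Th T1" "pcod Th T1' = pcod Th T1"
      using same by (simp_all add: same_type_def)
  next
    fix \<tau> assume fid: "\<tau> \<in> set (fid Th (pdom Th T1) (pcod Th T1))"
    then have "is_tester Th (pdom Th T1') (pcod Th T1') \<tau>"
      using operational_theory_fid(1)[OF ot] same by (simp add: same_type_def)
    then show "prob Th (apply_tester Th \<tau> T1) = prob Th (apply_tester Th \<tau> T1')"
      using operational_theory_mixtureD(5)[OF ot mix] gm fid by (simp add: gpt_mix_def)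
  qed
  then show thesis
    using mix that by blast
qed

lemma model_conds_convexD:
  assumes "model_conds Th mixrel \<Lambda> f" and "mixrel w T1 T2 T3"
  shows "f T1 = (\<lambda>y x. w * f T2 y x + (1 - w) * f T3 y x)"
  using assms unfolding model_conds_def by blast

lemma model_conds_change_mixrel:
  assumes "model_conds Th mixrel \<Lambda> f"
    and "\<And>w T1 T2 T3. mixrel' w T1 T2 T3 \<Longrightarrow> f T1 = (\<lambda>y x. w * f T2 y x + (1 - w) * f T3 y x)"
  shows "model_conds Th mixrel' \<Lambda> f"
  using assms(1) unfolding model_conds_def
  by (elim conjE, intro conjI) (assumption | (intro allI impI, erule assms(2)))+

lemma noncontextualD: "noncontextual Th m \<Longrightarrow> op_equiv Th T T' \<Longrightarrow> snd m T = snd m T'"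
  by (simp add: noncontextual_def)

definition lift_to_classes :: "('s, 'p) op_theory \<Rightarrow> ('p \<Rightarrow> 'o mat) \<Rightarrow> 'p set \<Rightarrow> 'o mat" where
  "lift_to_classes Th f X =
     (if X \<in> range (gpt_class Th) then f (SOME T. X = gpt_class Th T) else (\<lambda>_ _. 0))"

lemma lift_to_classes_gpt_class:
  assumes "\<And>T T'. op_equiv Th T T' \<Longrightarrow> f T = f T'"
  shows "lift_to_classes Th f (gpt_class Th T) = f T"
proof -
  have "gpt_class Th T = gpt_class Th (SOME T'. gpt_class Th T = gpt_class Th T')"
    by (rule someI) (rule refl)
  then have "op_equiv Th (SOME T'. gpt_class Th T = gpt_class Th T') T"
    by (simp add: gpt_class_eq_iff op_equiv_sym)
  then show ?thesis
    by (simp add: lift_to_classes_def assms)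
qed

lemma inj_on_compose_quotient: "inj_on (compose_quotient Th) {m. gpt_ontological_model Th m}"
proof (rule inj_onI)
  fix m m' assume "m \<in> {m. gpt_ontological_model Th m}" "m' \<in> {m. gpt_ontological_model Th m}"
    and eq: "compose_quotient Th m = compose_quotient Th m'"
  have "snd m X = snd m' X" for X
  proof (cases "X \<in> range (gpt_class Th)")
    case True
    with eq show ?thesis
      by (auto simp: compose_quotient_def fun_eq_iff)
  next
    case False
    with \<open>m \<in> _\<close> \<open>m' \<in> _\<close> show ?thesis
      by (simp add: gpt_ontological_model_def)
  qed
  with eq show "m = m'"
    by (simp add: compose_quotient_def prod_eq_iff fun_eq_iff)
qed

lemma compose_quotient_noncontextual_model:
  assumes "operational_theory Th" and "gpt_ontological_model Th m"
  shows "ontological_model Th (compose_quotient Th m)" "noncontextual Th (compose_quotient Th m)"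
proof -
  have gpt: "model_conds Th (gpt_mix Th) (fst m) (snd m \<circ> gpt_class Th)"
    using assms(2) by (simp add: gpt_ontological_model_def)
  show "ontological_model Th (compose_quotient Th m)"
    unfolding ontological_model_def compose_quotient_def fst_conv snd_conv
    by (rule model_conds_change_mixrel[OF gpt])
      (rule model_conds_convexD[OF gpt mixture_imp_gpt_mix[OF assms(1)]])
  show "noncontextual Th (compose_quotient Th m)"
    by (simp add: noncontextual_def compose_quotient_def gpt_class_eq_iff[symmetric])
qed

lemma noncontextual_model_lift:
  assumes ot: "operational_theory Th"
    and om: "ontological_model Th m" and nc: "noncontextual Th m"
  shows "gpt_ontological_model Th (fst m, lift_to_classes Th (snd m))"
    and "compose_quotient Th (fst m, lift_to_classes Th (snd m)) = m"
proof -
  have factor: "lift_to_classes Th (snd m) \<circ> gpt_class Th = snd m"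
    by (simp add: fun_eq_iff lift_to_classes_gpt_class noncontextualD[OF nc])
  have mc: "model_conds Th (mixture Th) (fst m) (snd m)"
    using om by (simp add: ontological_model_def)
  have "model_conds Th (gpt_mix Th) (fst m) (snd m)"
  proof (rule model_conds_change_mixrel[OF mc])
    fix w T1 T2 T3 assume "gpt_mix Th w T1 T2 T3"
    then obtain T1' where mix: "mixture Th w T1' T2 T3" and equiv: "op_equiv Th T1 T1'"
      by (rule gpt_mix_imp_equiv_mixture[OF ot])
    from equiv have "snd m T1 = snd m T1'"
      by (rule noncontextualD[OF nc])
    with model_conds_convexD[OF mc mix]
    show "snd m T1 = (\<lambda>y x. w * snd m T2 y x + (1 - w) * snd m T3 y x)"
      by simp
  qed
  moreover have "\<forall>X. X \<notin> range (gpt_class Th) \<longrightarrow> lift_to_classes Th (snd m) X = (\<lambda>_ _. 0)"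
    by (simp add: lift_to_classes_def)
  ultimately show "gpt_ontological_model Th (fst m, lift_to_classes Th (snd m))"
    by (simp add: gpt_ontological_model_def factor)
  show "compose_quotient Th (fst m, lift_to_classes Th (snd m)) = m"
    by (simp add: compose_quotient_def factor)
qed

lemma compose_quotient_image:
  assumes "operational_theory Th"
  shows "compose_quotient Th ` {m. gpt_ontological_model Th m}
           = {m. ontological_model Th m \<and> noncontextual Th m}"
proof (intro equalityI subsetI)
  fix m assume "m \<in> compose_quotient Th ` {m. gpt_ontological_model Th m}"
  then show "m \<in> {m. ontological_model Th m \<and> noncontextual Th m}"
    using compose_quotient_noncontextual_model[OF assms] by blast
next
  fix m assume "m \<in> {m. ontological_model Th m \<and> noncontextual Th m}"
  then have "(fst m, lift_to_classes Th (snd m)) \<in> {m. gpt_ontological_model Th m}"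
    and "compose_quotient Th (fst m, lift_to_classes Th (snd m)) = m"
    using noncontextual_model_lift[OF assms] by blast+
  then show "m \<in> compose_quotient Th ` {m. gpt_ontological_model Th m}"
    by (metis image_eqI)
qed

lemma the_inv_into_compose_quotient:
  assumes "operational_theory Th" and "ontological_model Th m" and "noncontextual Th m"
  shows "the_inv_into {m. gpt_ontological_model Th m} (compose_quotient Th) m
           = (fst m, lift_to_classes Th (snd m))"
  using the_inv_into_f_f[OF inj_on_compose_quotient] noncontextual_model_lift[OF assms]
  by (metis mem_Collect_eq)

theorem theorem2:
  fixes Th :: "('s, 'p) op_theory"
  assumes "operational_theory Th"
  shows "bij_betw (compose_quotient Th :: ('s \<Rightarrow> 'o list set) \<times> ('p set \<Rightarrow> 'o mat) \<Rightarrow> _)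
           {m. gpt_ontological_model Th m}
           {m. ontological_model Th m \<and> noncontextual Th m}
       \<and> (\<forall>m :: ('s \<Rightarrow> 'o list set) \<times> ('p \<Rightarrow> 'o mat). ontological_model Th m \<and> noncontextual Th m \<longrightarrow>
            (\<forall>T. snd (the_inv_into {m. gpt_ontological_model Th m} (compose_quotient Th) m) (gpt_class Th T)
                 = snd m T))"
proof (intro conjI allI impI)
  show "bij_betw (compose_quotient Th) {m. gpt_ontological_model Th m}
          {m. ontological_model Th m \<and> noncontextual Th m}"
    unfolding bij_betw_def using inj_on_compose_quotient compose_quotient_image[OF assms] by blast
next
  fix m :: "('s \<Rightarrow> 'o list set) \<times> ('p \<Rightarrow> 'o mat)" and T
  assume "ontological_model Th m \<and> noncontextual Th m"
  then have "ontological_model Th m" and nc: "noncontextual Th m"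
    by simp_all
  then show "snd (the_inv_into {m. gpt_ontological_model Th m} (compose_quotient Th) m) (gpt_class Th T)
      = snd m T"
    by (simp add: the_inv_into_compose_quotient[OF assms]
        lift_to_classes_gpt_class[OF noncontextualD[OF nc]])
qed

end
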